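(* Fix $\mathbf{p}\in\mathbb{Z}^2\setminus\{\mathbf 0\}$ and $\mathbf a\in\mathbb{Z}^2$. For each positive integer $N$ large enough that $\mathbf a\in\mathcal D$, let $n$, $\rho_k$ and the $n\times n$ matrix $A'$ be as defined in the context (depending on $N$). Suppose that, for all sufficiently large $N$, $\rho_0<0$, $\rho_k\ge 0$ for all $k=1,2,\dots,n-1$, and $\rho_k=0$ for at most one $k\in\{1,\dots,n-1\}$. Then for all sufficiently large $N$, the matrix $A'$ has a non-zero real eigenvalue.
   Context: For a positive integer $N$ let $\mathcal D=[-N,N]^2\cap\mathbb{Z}^2$, and for $\mathbf k\in\mathbb{Z}^2$ let $\widehat{\mathbf k}$ denote the unique element of $\mathcal D$ with $\mathbf k-\widehat{\mathbf k}\in(2N+1)\mathbb{Z}^2$. For $\mathbf a\in\mathcal D$ the (Zeitlin) class is $\Sigma'_{\mathbf a}=\{\widehat{\mathbf a+k\mathbf p}:k\in\mathbb{Z}\}$ and $n=|\Sigma'_{\mathbf a}|$; one has $n=(2N+1)/\gcd(2N+1,\gcd(|p_1|,|p_2|))$, which is odd, and $\widehat{\mathbf a+k\mathbf p}$ depends only on $k$ modulo $n$. Assuming $\mathbf 0\notin\Sigma'_{\mathbf a}$, define $\rho_k=\frac{1}{|\mathbf p|^2}-\frac{1}{|\widehat{\mathbf a+k\mathbf p}|^2}$ for $k\in\mathbb{Z}$ (an $n$-periodic sequence). $A'$ is the $n\times n$ matrix with rows and columns indexed by $0,1,\dots,n-1$ (taken modulo $n$) whose entries are $(A')_{j,j+1}=\rho_{j+1}$,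 $(A')_{j,j-1}=-\rho_{j-1}$ (indices mod $n$), and all other entries $0$. (This is the linearisation, restricted to one class and up to the scalar factor $\frac{\Gamma}{\varepsilon}\sin(\varepsilon\,\mathbf a\times\mathbf p)$, $\varepsilon=2\pi/(2N+1)$, of Zeitlin's sine truncation of the 2D Euler equations about the equilibrium with Fourier coefficients $\Gamma$ at $\pm\mathbf p$ and $0$ elsewhere.) *)

theory Defs
  imports Complex_Main "Jordan_Normal_Form.Char_Poly"
begin

definition hatc :: "nat \<Rightarrow> int \<Rightarrow> int" where
  "hatc N x = (x + int N) mod (2 * int N + 1) - int N"

definition hat :: "nat \<Rightarrow> int \<times> int \<Rightarrow> int \<times> int" where
  "hat N k = (hatc N (fst k), hatc N (snd k))"

definition Dom :: "nat \<Rightarrow> (int \<times> int) set" where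
  "Dom N = {k. \<bar>fst k\<bar> \<le> int N \<and> \<bar>snd k\<bar> \<le> int N}"

definition shiftv :: "int \<times> int \<Rightarrow> int \<times> int \<Rightarrow> int \<Rightarrow> int \<times> int" where
  "shiftv a p k = (fst a + k * fst p, snd a + k * snd p)"

definition zcls :: "nat \<Rightarrow> int \<times> int \<Rightarrow> int \<times> int \<Rightarrow> (int \<times> int) set" where
  "zcls N a p = {hat N (shiftv a p k) | k. True}"

definition ncls :: "nat \<Rightarrow> int \<times> int \<Rightarrow> int \<times> int \<Rightarrow> nat" where
  "ncls N a p = card (zcls N a p)"

definition normsq :: "int \<times> int \<Rightarrow> real" where
  "normsq k = real_of_int (fst k ^ 2 + snd k ^ 2)"

definition rho :: "nat \<Rightarrow> int \<times> int \<Rightarrow> int \<times> int \<Rightarrow> int \<Rightarrow> real" where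
  "rho N a p k = 1 / normsq p - 1 / normsq (hat N (shiftv a p k))"

definition Aprime :: "nat \<Rightarrow> int \<times> int \<Rightarrow> int \<times> int \<Rightarrow> real mat" where
  "Aprime N a p = (let n = ncls N a p in
     mat n n (\<lambda>(i, j).
       if j = (i + 1) mod n then rho N a p (int i + 1)
       else if j = (i + n - 1) mod n then - rho N a p (int i - 1)
       else 0))"

end

theory Submission
  imports Defs
begin

text \<open>
  Writing g l for rho_l, the matrix A' is a skew-symmetric cyclic tridiagonal sign pattern
  with column j scaled by g j. Every column sums to zero, so its characteristic polynomial
  chi vanishes at 0. For odd n each principal minor of order n - 1 is, after a cyclic
  relabelling, an even-sized tridiagonal determinant equal to the product of the remaining
  g l; hence chi'(0) is the sum over i of the products of all g l with l \<noteq> i. For large N the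
  class size n grows like N, while g 0 settles at the negative constant
  1/|p|^2 - 1/|a|^2 and every g l stays below 1/|p|^2. With at most one further zero among
  the g l this makes chi'(0) < 0, so the monic chi, decreasing through 0, has a positive root.
\<close>

definition cyc_succ :: "nat \<Rightarrow> nat \<Rightarrow> nat" where
  "cyc_succ n i = (if i + 1 = n then 0 else i + 1)"

definition cyc_pred :: "nat \<Rightarrow> nat \<Rightarrow> nat" where
  "cyc_pred n i = (if i = 0 then n - 1 else i - 1)"

lemma mod_Suc_eq_cyc_succ: "i < n \<Longrightarrow> (i + 1) mod n = cyc_succ n i"
  unfolding cyc_succ_def by (auto simp: mod_if)

lemma mod_pred_eq_cyc_pred: "i < n \<Longrightarrow> (i + n - 1) mod n = cyc_pred n i"
  unfolding cyc_pred_def by (auto simp: mod_if)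

definition cyclic_skew_mat :: "nat \<Rightarrow> (nat \<Rightarrow> 'a :: comm_ring_1) \<Rightarrow> 'a mat" where
  "cyclic_skew_mat n g = mat n n (\<lambda>(i, j).
     if j = cyc_succ n i then g j else if j = cyc_pred n i then - g j else 0)"

lemma cyclic_skew_mat_carrier [simp]: "cyclic_skew_mat n g \<in> carrier_mat n n"
  unfolding cyclic_skew_mat_def by simp

lemma cyclic_skew_mat_index:
  "i < n \<Longrightarrow> j < n \<Longrightarrow> cyclic_skew_mat n g $$ (i, j) =
     (if j = cyc_succ n i then g j else if j = cyc_pred n i then - g j else 0)"
  unfolding cyclic_skew_mat_def by simp

lemma det_skew_tridiagonal:
  fixes B :: "'a :: comm_ring_1 mat"
  assumes "B \<in> carrier_mat (2 * k) (2 * k)"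
    and "\<And>r c. r < 2 * k \<Longrightarrow> c < 2 * k \<Longrightarrow>
      B $$ (r, c) = (if c = r + 1 then h c else if r = c + 1 then - h c else 0)"
  shows "det B = (\<Prod>r < 2 * k. h r)"
  using assms
proof (induction k arbitrary: B h)
  case 0
  then show ?case by (simp add: det_def)
next
  case (Suc k)
  define n where "n = 2 * k + 2"
  have B: "B \<in> carrier_mat n n" using Suc.prems n_def by auto
  have B_index: "\<And>r c. r < n \<Longrightarrow> c < n \<Longrightarrow>
      B $$ (r, c) = (if c = r + 1 then h c else if r = c + 1 then - h c else 0)"
    using Suc.prems n_def by auto
  define D1 where "D1 = mat_delete B 1 0"
  have D1: "D1 \<in> carrier_mat (n - 1) (n - 1)"
    unfolding D1_def using mat_delete_carrier[OF B] .
  have D1_index: "\<And>r c. r < n - 1 \<Longrightarrow> c < n - 1 \<Longrightarrow>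
      D1 $$ (r, c) = B $$ (if r < 1 then r else Suc r, Suc c)"
    unfolding D1_def mat_delete_def using B by auto
  define D2 where "D2 = mat_delete D1 0 0"
  have D2: "D2 \<in> carrier_mat (2 * k) (2 * k)"
    unfolding D2_def using mat_delete_carrier[OF D1] n_def by auto
  have D2_index: "\<And>r c. r < 2 * k \<Longrightarrow> c < 2 * k \<Longrightarrow> D2 $$ (r, c) = B $$ (r + 2, c + 2)"
    unfolding D2_def mat_delete_def using D1 D1_index n_def by auto
  have det_D2: "det D2 = (\<Prod>r < 2 * k. h (r + 2))"
    by (rule Suc.IH[OF D2]) (use D2_index B_index n_def in auto)
  \<comment> \<open>Column 0 of B has its only nonzero entry in row 1, and then row 0 of the minor
      has its only nonzero entry in column 0.\<close>
  have "det B = (\<Sum>i<n. B $$ (i, 0) * cofactor B i 0)"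
    by (rule laplace_expansion_column[OF B]) (simp add: n_def)
  also have "\<dots> = (\<Sum>i\<in>{1}. B $$ (i, 0) * cofactor B i 0)"
    by (rule sum.mono_neutral_right) (auto simp: n_def B_index)
  also have "\<dots> = - B $$ (1, 0) * det D1"
    unfolding cofactor_def D1_def by simp
  also have "det D1 = (\<Sum>j<n - 1. D1 $$ (0, j) * cofactor D1 0 j)"
    by (rule laplace_expansion_row[OF D1]) (simp add: n_def)
  also have "\<dots> = (\<Sum>j\<in>{0}. D1 $$ (0, j) * cofactor D1 0 j)"
    by (rule sum.mono_neutral_right) (auto simp: n_def B_index D1_index)
  also have "\<dots> = h 1 * det D2"
    unfolding cofactor_def D2_def using B_index D1_index n_def by simp
  also have "B $$ (1, 0) = - h 0"
    using B_index n_def by simp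
  finally have "det B = h 0 * h 1 * (\<Prod>r < 2 * k. h (r + 2))"
    using det_D2 by (simp add: mult.assoc)
  also have "\<dots> = (\<Prod>r < Suc (Suc (2 * k)). h r)"
    unfolding prod.lessThan_Suc_shift by (simp add: mult.assoc)
  finally show ?case by simp
qed

lemma det_permute_rows_cols:
  fixes B :: "'a :: comm_ring_1 mat"
  assumes B: "B \<in> carrier_mat m m" and p: "p permutes {0..<m}"
  shows "det (mat m m (\<lambda>(r, c). B $$ (p r, p c))) = det B"
proof -
  define C where "C = mat m m (\<lambda>(r, c). B $$ (p r, c))"
  have C: "C \<in> carrier_mat m m" unfolding C_def by simp
  have det_C: "det C = signof p * det B"
    unfolding C_def by (rule det_permute_rows[OF B p])
  define E where "E = mat m m (\<lambda>(r, c). B $$ (p r, p c))"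
  have E: "E \<in> carrier_mat m m" unfolding E_def by simp
  have p_range: "\<And>x. x < m \<Longrightarrow> p x < m" using p permutes_in_image by fastforce
  have E_transpose: "transpose_mat E = mat m m (\<lambda>(r, c). transpose_mat C $$ (p r, c))"
    by (rule eq_matI) (auto simp: E_def C_def p_range)
  have "det E = det (transpose_mat E)" using det_transpose[OF E] by simp
  also have "\<dots> = signof p * det (transpose_mat C)"
    unfolding E_transpose by (rule det_permute_rows[OF _ p]) (use C in auto)
  also have "\<dots> = signof p * signof p * det B"
    using det_transpose[OF C] det_C by (simp add: mult.assoc)
  also have "signof p * signof p = (1 :: 'a)"
    by (metis of_int_mult sign_idempotent of_int_1)
  finally show ?thesis unfolding E_def by simp
qed

lemma det_cyclic_skew_mat_principal_minor:
  fixes g :: "nat \<Rightarrow> 'a :: comm_ring_1"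
  assumes n: "3 \<le> n" "odd n" and i: "i < n"
  shows "det (mat_delete (cyclic_skew_mat n g) i i) = (\<Prod>l \<in> {..<n} - {i}. g l)"
proof -
  define m where "m = n - 1"
  \<comment> \<open>Relabelling the indices cyclically as i+1, ..., i-1 turns the minor into a
      tridiagonal matrix; the wrap-around entries sit in the deleted row and column.\<close>
  define \<sigma> where "\<sigma> r = (if i + 1 + r < n then i + 1 + r else i + 1 + r - n)" for r
  have \<sigma>_range: "\<And>r. r < m \<Longrightarrow> \<sigma> r < n" unfolding \<sigma>_def m_def using i by auto
  have \<sigma>_succ: "\<And>r c. r < m \<Longrightarrow> c < m \<Longrightarrow> (\<sigma> c = cyc_succ n (\<sigma> r)) = (c = r + 1)"
    unfolding \<sigma>_def cyc_succ_def m_def using i n by auto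
  have \<sigma>_pred: "\<And>r c. r < m \<Longrightarrow> c < m \<Longrightarrow> (\<sigma> c = cyc_pred n (\<sigma> r)) = (r = c + 1)"
    unfolding \<sigma>_def cyc_pred_def m_def using i n by auto
  define B where "B = mat m m (\<lambda>(r, c). cyclic_skew_mat n g $$ (\<sigma> r, \<sigma> c))"
  have m_even: "m = 2 * (m div 2)" using n unfolding m_def by auto
  have B: "B \<in> carrier_mat (2 * (m div 2)) (2 * (m div 2))" unfolding B_def using m_even by simp
  have det_B: "det B = (\<Prod>r < 2 * (m div 2). g (\<sigma> r))"
  proof (rule det_skew_tridiagonal[OF B])
    fix r c assume "r < 2 * (m div 2)" "c < 2 * (m div 2)"
    then have rc: "r < m" "c < m" using m_even by auto
    show "B $$ (r, c) = (if c = r + 1 then g (\<sigma> c) else if r = c + 1 then - g (\<sigma> c) else 0)"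
      unfolding B_def using rc \<sigma>_range \<sigma>_succ[OF rc] \<sigma>_pred[OF rc]
      by (simp add: cyclic_skew_mat_index)
  qed
  define \<pi> where "\<pi> r = (if r < i then r + n - 1 - i else if r < m then r - i else r)" for r
  have \<pi>: "\<pi> permutes {0..<m}"
  proof (rule bij_imp_permutes)
    show "bij_betw \<pi> {0..<m} {0..<m}"
      by (rule bij_betw_byWitness[where f'="\<lambda>s. if s < m - i then s + i
            else if s < m then s - (m - i) else s"]) (use i in \<open>auto simp: \<pi>_def m_def\<close>)
    show "\<And>x. x \<notin> {0..<m} \<Longrightarrow> \<pi> x = x" using i by (auto simp: \<pi>_def m_def)
  qed
  have minor_eq: "mat_delete (cyclic_skew_mat n g) i i = mat m m (\<lambda>(r, c). B $$ (\<pi> r, \<pi> c))"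
  proof (rule eq_matI)
    fix r c assume "r < dim_row (mat m m (\<lambda>(r, c). B $$ (\<pi> r, \<pi> c)))"
      "c < dim_col (mat m m (\<lambda>(r, c). B $$ (\<pi> r, \<pi> c)))"
    then have rc: "r < m" "c < m" by auto
    have \<pi>_range: "\<pi> r < m" "\<pi> c < m" using rc i unfolding \<pi>_def m_def by auto
    have \<sigma>_\<pi>: "\<And>x. x < m \<Longrightarrow> \<sigma> (\<pi> x) = (if x < i then x else Suc x)"
      unfolding \<sigma>_def \<pi>_def m_def using i by auto
    show "mat_delete (cyclic_skew_mat n g) i i $$ (r, c) = mat m m (\<lambda>(r, c). B $$ (\<pi> r, \<pi> c)) $$ (r, c)"
      using rc \<pi>_range \<sigma>_\<pi>[OF rc(1)] \<sigma>_\<pi>[OF rc(2)]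
      unfolding mat_delete_def B_def m_def by (simp add: cyclic_skew_mat_def)
  qed (auto simp: m_def mat_delete_def cyclic_skew_mat_def)
  have "det (mat_delete (cyclic_skew_mat n g) i i) = det B"
    unfolding minor_eq using det_permute_rows_cols[OF _ \<pi>, of B] B m_even by simp
  also have "\<dots> = (\<Prod>r < m. g (\<sigma> r))" using det_B m_even by simp
  also have "\<dots> = (\<Prod>l \<in> {..<n} - {i}. g l)"
  proof (rule prod.reindex_bij_betw)
    show "bij_betw \<sigma> {..<m} ({..<n} - {i})"
      by (rule bij_betw_byWitness[where f'="\<lambda>l. if l > i then l - i - 1 else l + n - i - 1"])
        (use i in \<open>auto simp: \<sigma>_def m_def\<close>)
  qed
  finally show ?thesis .
qed

lemma poly_char_poly_0:
  fixes M :: "'a :: field mat"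
  assumes "M \<in> carrier_mat n n"
  shows "poly (char_poly M) 0 = (-1) ^ n * det M"
proof -
  have "poly (char_poly M) 0 = det (- char_matrix M 0)"
    by (rule char_poly_matrix[OF assms])
  also have "- char_matrix M 0 = (-1) \<cdot>\<^sub>m M"
    by (rule eq_matI) (use assms in \<open>auto simp: char_matrix_def\<close>)
  finally show ?thesis using assms by simp
qed

lemma poly_pderiv_char_poly_cyclic_skew_mat_0:
  fixes g :: "nat \<Rightarrow> 'a :: field"
  assumes "3 \<le> n" "odd n"
  shows "poly (pderiv (char_poly (cyclic_skew_mat n g))) 0 = (\<Sum>i<n. \<Prod>l \<in> {..<n} - {i}. g l)"
proof -
  have "poly (pderiv (char_poly (cyclic_skew_mat n g))) 0
      = (\<Sum>i<n. poly (char_poly (mat_delete (cyclic_skew_mat n g) i i)) 0)"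
    unfolding pderiv_char_poly[OF cyclic_skew_mat_carrier] poly_sum ..
  also have "\<dots> = (\<Sum>i<n. det (mat_delete (cyclic_skew_mat n g) i i))"
  proof (intro sum.cong refl)
    fix i
    have "even (n - 1)" using assms by simp
    then show "poly (char_poly (mat_delete (cyclic_skew_mat n g) i i)) 0
        = det (mat_delete (cyclic_skew_mat n g) i i)"
      using poly_char_poly_0[OF mat_delete_carrier[OF cyclic_skew_mat_carrier], of n g i i]
      by simp
  qed
  also have "\<dots> = (\<Sum>i<n. \<Prod>l \<in> {..<n} - {i}. g l)"
    using det_cyclic_skew_mat_principal_minor[OF assms] by (intro sum.cong) auto
  finally show ?thesis .
qed

lemma poly_char_poly_0_if_column_sums_zero:
  fixes A :: "'a :: field mat"
  assumes A: "A \<in> carrier_mat n n" and "0 < n"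
    and col: "\<And>j. j < n \<Longrightarrow> (\<Sum>i<n. A $$ (i, j)) = 0"
  shows "poly (char_poly A) 0 = 0"
proof -
  define v where "v = vec n (\<lambda>_. 1 :: 'a)"
  have "eigenvector (transpose_mat A) v 0"
    unfolding eigenvector_def
  proof (intro conjI)
    show "v \<in> carrier_vec (dim_row (transpose_mat A))" using A unfolding v_def by simp
    show "v \<noteq> 0\<^sub>v (dim_row (transpose_mat A))"
    proof
      assume "v = 0\<^sub>v (dim_row (transpose_mat A))"
      then have "v $ 0 = 0\<^sub>v n $ 0" using A by simp
      then show False using \<open>0 < n\<close> unfolding v_def by simp
    qed
    show "transpose_mat A *\<^sub>v v = 0 \<cdot>\<^sub>v v"
    proof (rule eq_vecI)
      fix j assume "j < dim_vec (0 \<cdot>\<^sub>v v)"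
      then have j: "j < n" unfolding v_def by simp
      have "(transpose_mat A *\<^sub>v v) $ j = (\<Sum>i<n. A $$ (i, j))"
        using A j unfolding v_def by (simp add: scalar_prod_def lessThan_atLeast0)
      then show "(transpose_mat A *\<^sub>v v) $ j = (0 \<cdot>\<^sub>v v) $ j"
        using col j unfolding v_def by simp
    qed (use A v_def in simp)
  qed
  then have "eigenvalue (transpose_mat A) 0" unfolding eigenvalue_def by blast
  then show ?thesis
    using eigenvalue_root_char_poly[of "transpose_mat A" n] char_poly_transpose_mat[OF A] A by simp
qed

lemma column_sum_cyclic_skew_mat:
  assumes "3 \<le> n" "j < n"
  shows "(\<Sum>i<n. cyclic_skew_mat n g $$ (i, j)) = 0"
proof -
  have "(\<Sum>i<n. cyclic_skew_mat n g $$ (i, j))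
      = (\<Sum>i<n. (if i = cyc_pred n j then g j else 0) + (if i = cyc_succ n j then - g j else 0))"
  proof (intro sum.cong refl)
    fix i assume "i \<in> {..<n}"
    then have i: "i < n" by simp
    have "(j = cyc_succ n i) = (i = cyc_pred n j)" "(j = cyc_pred n i) = (i = cyc_succ n j)"
      "cyc_pred n j \<noteq> cyc_succ n j"
      using assms i unfolding cyc_succ_def cyc_pred_def by auto
    then show "cyclic_skew_mat n g $$ (i, j)
        = (if i = cyc_pred n j then g j else 0) + (if i = cyc_succ n j then - g j else 0)"
      using i assms by (simp add: cyclic_skew_mat_index)
  qed
  also have "\<dots> = 0"
    using assms unfolding sum.distrib by (auto simp: cyc_succ_def cyc_pred_def)
  finally show ?thesis .
qed

lemma monic_poly_positive_root:
  fixes P :: "real poly"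
  assumes "lead_coeff P = 1" "poly P 0 = 0" "poly (pderiv P) 0 < 0"
  shows "\<exists>x > 0. poly P x = 0"
proof -
  obtain d where d: "d > 0" "\<And>h. h > 0 \<Longrightarrow> h < d \<Longrightarrow> poly P (0 + h) < poly P 0"
    using DERIV_neg_dec_right[OF poly_DERIV assms(3)] by blast
  have neg: "poly P (d / 2) < 0" using d assms(2) by simp
  obtain R where R: "\<And>x. x \<ge> R \<Longrightarrow> poly P x \<ge> 1"
    using poly_pinfty_gt_lc[of P] assms(1) by auto
  have "poly P (max R d) > 0" using R[of "max R d"] by simp
  moreover have "d / 2 < max R d" using d(1) by simp
  ultimately obtain x where "d / 2 < x" "poly P x = 0"
    using poly_IVT_pos[OF _ neg] by blast
  then show ?thesis using d(1) by (intro exI[of _ x]) simp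
qed

lemma cyclic_skew_mat_positive_eigenvalue:
  fixes g :: "nat \<Rightarrow> real"
  assumes "3 \<le> n" "odd n" and "(\<Sum>i<n. \<Prod>l \<in> {..<n} - {i}. g l) < 0"
  shows "\<exists>x > 0. eigenvalue (cyclic_skew_mat n g) x"
proof -
  define P where "P = char_poly (cyclic_skew_mat n g)"
  have "lead_coeff P = 1"
    using degree_monic_char_poly[OF cyclic_skew_mat_carrier, of n g] unfolding P_def by simp
  moreover have "poly P 0 = 0"
    unfolding P_def
    by (rule poly_char_poly_0_if_column_sums_zero[OF cyclic_skew_mat_carrier])
      (use assms(1) column_sum_cyclic_skew_mat[OF assms(1)] in auto)
  moreover have "poly (pderiv P) 0 < 0"
    unfolding P_def poly_pderiv_char_poly_cyclic_skew_mat_0[OF assms(1,2)] by fact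
  ultimately obtain x where "x > 0" "poly P x = 0" using monic_poly_positive_root by blast
  then show ?thesis
    using eigenvalue_root_char_poly[OF cyclic_skew_mat_carrier] unfolding P_def by blast
qed

lemma sum_prod_except_neg:
  fixes g :: "nat \<Rightarrow> real"
  assumes n: "2 \<le> n" and g0: "g 0 < 0"
    and bounds: "\<And>l. l \<in> {1..<n} \<Longrightarrow> 0 \<le> g l \<and> g l \<le> K"
    and zeros: "card {l \<in> {1..<n}. g l = 0} \<le> 1"
    and dominant: "K < real (n - 1) * - g 0"
  shows "(\<Sum>i<n. \<Prod>l \<in> {..<n} - {i}. g l) < 0"
proof (cases "\<exists>l0 \<in> {1..<n}. g l0 = 0")
  case True
  then obtain l0 where l0: "l0 \<in> {1..<n}" "g l0 = 0" by blast
  \<comment> \<open>Only the term omitting the unique zero survives.\<close>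
  have pos: "g l > 0" if l: "l \<in> {1..<n} - {l0}" for l
  proof (rule ccontr)
    assume "\<not> g l > 0"
    then have "{l, l0} \<subseteq> {l \<in> {1..<n}. g l = 0}" using l l0 bounds[of l] by auto
    moreover have "finite {l \<in> {1..<n}. g l = 0}" by simp
    ultimately have "card {l, l0} \<le> 1" using zeros card_mono order_trans by blast
    then show False using l by simp
  qed
  have "(\<Sum>i<n. \<Prod>l \<in> {..<n} - {i}. g l) = (\<Sum>i\<in>{l0}. \<Prod>l \<in> {..<n} - {i}. g l)"
    by (rule sum.mono_neutral_right) (use l0 in \<open>auto intro!: prod_zero\<close>)
  also have "\<dots> = (\<Prod>l \<in> {..<n} - {l0}. g l)" by simp
  also have "\<dots> = g 0 * (\<Prod>l \<in> {..<n} - {l0} - {0}. g l)"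
    by (rule prod.remove) (use l0 in auto)
  also have "\<dots> < 0"
    using pos by (intro mult_neg_pos[OF g0] prod_pos) auto
  finally show ?thesis .
next
  case False
  \<comment> \<open>All factors but g 0 are positive; each term omitting some g i with i \<ge> 1 is at most
      g 0 P / K, where P is the term omitting g 0, and n - 1 of these outweigh P.\<close>
  then have pos: "\<And>l. l \<in> {1..<n} \<Longrightarrow> g l > 0" using bounds by force
  define P where "P = (\<Prod>l \<in> {1..<n}. g l)"
  have P: "P > 0" unfolding P_def by (rule prod_pos) (use pos in auto)
  have K: "K > 0" using bounds[of 1] pos[of 1] n by simp
  have term_le: "(\<Prod>l \<in> {..<n} - {i}. g l) \<le> g 0 * P / K" if i: "i \<in> {1..<n}" for i
  proof -
    have "{..<n} - {i} = insert 0 ({1..<n} - {i})" using i by auto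
    then have term_eq: "(\<Prod>l \<in> {..<n} - {i}. g l) = g 0 * (\<Prod>l \<in> {1..<n} - {i}. g l)" by simp
    have "P = g i * (\<Prod>l \<in> {1..<n} - {i}. g l)"
      unfolding P_def by (rule prod.remove) (use i in auto)
    moreover have "P / K \<le> P / g i"
      using pos[OF i] bounds[OF i] P by (simp add: frac_le)
    ultimately have "P / K \<le> (\<Prod>l \<in> {1..<n} - {i}. g l)"
      using pos[OF i] by simp
    then show ?thesis
      unfolding term_eq using mult_left_mono_neg[of "P / K" _ "g 0"] g0 by simp
  qed
  have "{..<n} = insert 0 {1..<n}" using n by auto
  then have "(\<Sum>i<n. \<Prod>l \<in> {..<n} - {i}. g l)
      = (\<Prod>l \<in> {..<n} - {0}. g l) + (\<Sum>i\<in>{1..<n}. \<Prod>l \<in> {..<n} - {i}. g l)" by simp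
  also have "(\<Prod>l \<in> {..<n} - {0}. g l) = P"
    unfolding P_def by (rule prod.cong) auto
  also have "(\<Sum>i\<in>{1..<n}. \<Prod>l \<in> {..<n} - {i}. g l) \<le> (\<Sum>i\<in>{1..<n}. g 0 * P / K)"
    by (rule sum_mono) (rule term_le)
  also have "(\<Sum>i\<in>{1..<n}. g 0 * P / K) = real (n - 1) * g 0 * P / K" by simp
  also have "real (n - 1) * g 0 * P / K < - P"
  proof -
    have "real (n - 1) * g 0 * P < - K * P"
      using dominant P mult_strict_right_mono[of "real (n - 1) * g 0" "- K" P] by simp
    then show ?thesis using K by (simp add: divide_less_eq mult.commute)
  qed
  finally show ?thesis by simp
qed

definition is_class_period :: "nat \<Rightarrow> int \<times> int \<Rightarrow> int \<Rightarrow> bool" where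
  "is_class_period N p d \<longleftrightarrow> (2 * int N + 1) dvd d * fst p \<and> (2 * int N + 1) dvd d * snd p"

definition class_period :: "nat \<Rightarrow> int \<times> int \<Rightarrow> nat" where
  "class_period N p = (LEAST d. 0 < d \<and> is_class_period N p (int d))"

lemma hatc_eq_self: "\<bar>x\<bar> \<le> int N \<Longrightarrow> hatc N x = x"
  unfolding hatc_def by simp

lemma hatc_eq_iff: "hatc N x = hatc N y \<longleftrightarrow> (2 * int N + 1) dvd (x - y)"
proof -
  have "hatc N x = hatc N y \<longleftrightarrow> (x + int N) mod (2 * int N + 1) = (y + int N) mod (2 * int N + 1)"
    unfolding hatc_def by simp
  also have "\<dots> \<longleftrightarrow> (2 * int N + 1) dvd (x + int N) - (y + int N)" by (rule mod_eq_dvd_iff)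
  finally show ?thesis by simp
qed

lemma hat_shiftv_eq_iff:
  "hat N (shiftv a p k) = hat N (shiftv a p k') \<longleftrightarrow> is_class_period N p (k - k')"
  unfolding hat_def shiftv_def is_class_period_def
  by (simp add: hatc_eq_iff left_diff_distrib)

lemma class_period_pos: "0 < class_period N p"
  and is_class_period_class_period: "is_class_period N p (int (class_period N p))"
proof -
  have "0 < 2 * N + 1 \<and> is_class_period N p (int (2 * N + 1))"
    unfolding is_class_period_def by (simp add: add.commute)
  then have "0 < class_period N p \<and> is_class_period N p (int (class_period N p))"
    unfolding class_period_def by (rule LeastI)
  then show "0 < class_period N p" "is_class_period N p (int (class_period N p))" by auto
qed

lemma is_class_period_iff_dvd: "is_class_period N p d \<longleftrightarrow> int (class_period N p) dvd d"
proof
  assume "int (class_period N p) dvd d"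
  then obtain c where "d = int (class_period N p) * c" by blast
  then show "is_class_period N p d"
    using is_class_period_class_period[of N p] unfolding is_class_period_def
    by (metis dvd_mult mult.assoc mult.commute)
next
  assume d: "is_class_period N p d"
  define P where "P = int (class_period N p)"
  have P: "0 < P" unfolding P_def using class_period_pos by simp
  \<comment> \<open>Periods are closed under integer combinations, so d mod P is one; minimality forces it to vanish.\<close>
  have "is_class_period N p (d - (d div P) * P)"
    using d is_class_period_class_period[of N p] unfolding is_class_period_def P_def
    by (simp add: left_diff_distrib dvd_diff mult.assoc)
  then have period_mod: "is_class_period N p (int (nat (d mod P)))"
    using P by (simp add: minus_div_mult_eq_mod)
  show "P dvd d" unfolding P_def
  proof (rule ccontr)
    assume "\<not> int (class_period N p) dvd d"
    then have "0 < nat (d mod P)"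
      using P unfolding P_def by (simp add: dvd_eq_mod_eq_0 order_le_neq_trans)
    then have "class_period N p \<le> nat (d mod P)"
      using period_mod unfolding class_period_def by (simp add: Least_le)
    moreover have "0 \<le> d mod P" "d mod P < P" using P by simp_all
    ultimately show False unfolding P_def by (simp add: le_nat_iff)
  qed
qed

lemma hat_shiftv_mod_class_period:
  "hat N (shiftv a p k) = hat N (shiftv a p (k mod int (class_period N p)))"
  unfolding hat_shiftv_eq_iff is_class_period_iff_dvd by (simp add: mod_eq_dvd_iff[symmetric])

lemma rho_mod_class_period: "rho N a p k = rho N a p (k mod int (class_period N p))"
  unfolding rho_def using hat_shiftv_mod_class_period by metis

lemma ncls_eq_class_period: "ncls N a p = class_period N p"
proof -
  define \<phi> where "\<phi> k = hat N (shiftv a p (int k))" for k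
  have "zcls N a p = \<phi> ` {0..<class_period N p}"
  proof
    show "zcls N a p \<subseteq> \<phi> ` {0..<class_period N p}"
    proof
      fix x assume "x \<in> zcls N a p"
      then obtain k where k: "x = hat N (shiftv a p k)" unfolding zcls_def by blast
      have "x = \<phi> (nat (k mod int (class_period N p)))"
        unfolding k \<phi>_def using class_period_pos[of N p]
        by (subst hat_shiftv_mod_class_period) simp
      moreover have "nat (k mod int (class_period N p)) \<in> {0..<class_period N p}"
        using class_period_pos[of N p] by (simp add: nat_less_iff)
      ultimately show "x \<in> \<phi> ` {0..<class_period N p}" by blast
    qed
    show "\<phi> ` {0..<class_period N p} \<subseteq> zcls N a p" unfolding zcls_def \<phi>_def by blast
  qed
  moreover have "inj_on \<phi> {0..<class_period N p}"
  proof
    fix i j assume ij: "i \<in> {0..<class_period N p}" "j \<in> {0..<class_period N p}" "\<phi> i = \<phi> j"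
    then have "int (class_period N p) dvd int i - int j"
      unfolding \<phi>_def hat_shiftv_eq_iff is_class_period_iff_dvd by simp
    show "i = j"
    proof (rule ccontr)
      assume "i \<noteq> j"
      then have "int i - int j \<noteq> 0" by simp
      then have "\<bar>int (class_period N p)\<bar> \<le> \<bar>int i - int j\<bar>"
        using dvd_imp_le_int \<open>int (class_period N p) dvd int i - int j\<close> by blast
      then show False using ij by auto
    qed
  qed
  ultimately show ?thesis unfolding ncls_def by (simp add: card_image)
qed

lemma odd_class_period: "odd (class_period N p)"
proof
  assume "even (class_period N p)"
  moreover have "int (class_period N p) dvd 2 * int N + 1"
    unfolding is_class_period_iff_dvd[symmetric] is_class_period_def by simp
  ultimately have "(2::int) dvd 2 * int N + 1" using dvd_trans even_of_nat by blast
  then show False by simp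
qed

lemma class_period_lower_bound:
  assumes "p \<noteq> (0, 0)"
  shows "2 * int N + 1 \<le> int (class_period N p) * gcd (fst p) (snd p)"
proof -
  have "(2 * int N + 1) dvd gcd (int (class_period N p) * fst p) (int (class_period N p) * snd p)"
    using is_class_period_class_period[of N p] unfolding is_class_period_def by simp
  then have "(2 * int N + 1) dvd int (class_period N p) * gcd (fst p) (snd p)"
    using gcd_mult_distrib_int[of "int (class_period N p)" "fst p" "snd p"] by simp
  moreover have "0 < int (class_period N p) * gcd (fst p) (snd p)"
    using assms class_period_pos[of N p] by (cases p) auto
  ultimately show ?thesis by (simp add: zdvd_imp_le)
qed

lemma Aprime_eq_cyclic_skew_mat:
  "Aprime N a p = cyclic_skew_mat (ncls N a p) (\<lambda>l. rho N a p (int l))"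
proof -
  define m where "m = class_period N p"
  have rho_nat_mod: "rho N a p (int (k mod m)) = rho N a p (int k)" for k
    unfolding m_def by (metis of_nat_mod rho_mod_class_period)
  have rho_succ: "rho N a p (int i + 1) = rho N a p (int (cyc_succ m i))" if "i < m" for i
    using rho_nat_mod[of "i + 1"] mod_Suc_eq_cyc_succ[OF that] by (simp add: add.commute)
  have rho_pred: "rho N a p (int i - 1) = rho N a p (int (cyc_pred m i))" if "i < m" for i
  proof -
    have "(int i - 1) mod int m = int (i + m - 1) mod int m"
      using that by (simp add: of_nat_diff mod_add_self2[symmetric, of "int i - 1" "int m"] algebra_simps)
    then have "rho N a p (int i - 1) = rho N a p (int (i + m - 1))"
      using rho_mod_class_period unfolding m_def by metis
    then show ?thesis using rho_nat_mod[of "i + m - 1"] mod_pred_eq_cyc_pred[OF that] by simp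
  qed
  show ?thesis
    unfolding Aprime_def Let_def ncls_eq_class_period m_def[symmetric] cyclic_skew_mat_def
    by (rule cong_mat, simp_all only: split mod_Suc_eq_cyc_succ mod_pred_eq_cyc_pred rho_succ rho_pred)
      auto
qed

lemma rho_le: "rho N a p k \<le> 1 / normsq p"
  unfolding rho_def normsq_def by simp

lemma eventually_rho_0:
  "\<forall>\<^sub>F N in sequentially. rho N a p 0 = 1 / normsq p - 1 / normsq a"
  unfolding eventually_sequentially
proof (intro exI allI impI)
  fix N assume "nat (max \<bar>fst a\<bar> \<bar>snd a\<bar>) \<le> N"
  then have "hat N a = a" unfolding hat_def by (cases a) (auto simp: hatc_eq_self)
  then show "rho N a p 0 = 1 / normsq p - 1 / normsq a"
    unfolding rho_def shiftv_def by simp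
qed

lemma filterlim_ncls_at_top:
  assumes "p \<noteq> (0, 0)"
  shows "filterlim (\<lambda>N. ncls N a p) at_top sequentially"
  unfolding filterlim_at_top eventually_sequentially
proof (intro allI exI impI)
  fix Z N :: nat
  define G where "G = gcd (fst p) (snd p)"
  have G: "0 < G" unfolding G_def using assms by (cases p) auto
  assume "nat G * Z \<le> N"
  then have "int (nat G * Z) \<le> int N" by linarith
  then have "int Z * G < 2 * int N + 1" using G by (simp add: mult.commute)
  also have "\<dots> \<le> int (ncls N a p) * G"
    unfolding ncls_eq_class_period G_def by (rule class_period_lower_bound[OF assms])
  finally show "Z \<le> ncls N a p" using G by simp
qed

lemma Aprime_positive_eigenvalue:
  assumes n: "3 \<le> ncls N a p" and rho_0: "rho N a p 0 < 0"
    and nonneg: "\<forall>k::int. 1 \<le> k \<and> k \<le> int (ncls N a p) - 1 \<longrightarrow> rho N a p k \<ge> 0"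
    and zeros: "card {k::int. 1 \<le> k \<and> k \<le> int (ncls N a p) - 1 \<and> rho N a p k = 0} \<le> 1"
    and dominant: "1 / normsq p < real (ncls N a p - 1) * - rho N a p 0"
  shows "\<exists>x > 0. eigenvalue (Aprime N a p) x"
proof -
  define n where "n = ncls N a p"
  define g where "g l = rho N a p (int l)" for l
  have "card (int ` {l \<in> {1..<n}. g l = 0})
      \<le> card {k::int. 1 \<le> k \<and> k \<le> int n - 1 \<and> rho N a p k = 0}"
    by (rule card_mono) (auto simp: g_def intro: finite_subset[of _ "{1..int n - 1}"])
  then have "card {l \<in> {1..<n}. g l = 0} \<le> 1"
    using zeros unfolding n_def by (simp add: card_image)
  then have "(\<Sum>i<n. \<Prod>l \<in> {..<n} - {i}. g l) < 0"
    using n rho_0 nonneg dominant rho_le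
    by (intro sum_prod_except_neg[where K = "1 / normsq p"]) (auto simp: n_def g_def)
  moreover have "odd n" unfolding n_def ncls_eq_class_period by (rule odd_class_period)
  ultimately show ?thesis
    using cyclic_skew_mat_positive_eigenvalue n
    unfolding Aprime_eq_cyclic_skew_mat n_def g_def by blast
qed

theorem theorem1:
  fixes p a :: "int \<times> int"
  assumes "p \<noteq> (0, 0)"
    and "eventually (\<lambda>N.
           (0, 0) \<notin> zcls N a p \<and>
           rho N a p 0 < 0 \<and>
           (\<forall>k::int. 1 \<le> k \<and> k \<le> int (ncls N a p) - 1 \<longrightarrow> rho N a p k \<ge> 0) \<and>
           card {k::int. 1 \<le> k \<and> k \<le> int (ncls N a p) - 1 \<and> rho N a p k = 0} \<le> 1)
         sequentially"
  shows "eventually (\<lambda>N. \<exists>ev::real. ev \<noteq> 0 \<and> eigenvalue (Aprime N a p) ev) sequentially"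
proof -
  define r0 where "r0 = 1 / normsq p - 1 / normsq a"
  define K where "K = 1 / normsq p"
  have rho_0: "\<forall>\<^sub>F N in sequentially. rho N a p 0 = r0"
    unfolding r0_def by (rule eventually_rho_0)
  obtain N where "rho N a p 0 = r0" "rho N a p 0 < 0"
    using eventually_happens'[OF trivial_limit_sequentially eventually_conj[OF rho_0 assms(2)]]
    by blast
  then have "r0 < 0" by simp
  have dominant: "3 \<le> n \<and> K < real (n - 1) * - r0" if "nat \<lceil>K / - r0\<rceil> + 3 \<le> n" for n
  proof -
    have "K / - r0 < real (n - 1)" using that by linarith
    moreover have "K / - r0 < real (n - 1) \<longleftrightarrow> K < real (n - 1) * - r0"
      by (rule pos_divide_less_eq) (use \<open>r0 < 0\<close> in simp)
    ultimately show ?thesis using that by simp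
  qed
  have "\<forall>\<^sub>F N in sequentially. nat \<lceil>K / - r0\<rceil> + 3 \<le> ncls N a p"
    using filterlim_ncls_at_top[OF assms(1)] unfolding filterlim_at_top by blast
  then show ?thesis using rho_0 assms(2)
  proof eventually_elim
    case (elim N)
    have "3 \<le> ncls N a p" "1 / normsq p < real (ncls N a p - 1) * - rho N a p 0"
      using dominant[OF elim(1)] elim(2) unfolding K_def by (auto simp: of_nat_diff)
    then obtain x where "x > 0" "eigenvalue (Aprime N a p) x"
      using Aprime_positive_eigenvalue elim(3) by blast
    then show ?case by (intro exI[of _ x]) simp
  qed
qed

end
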